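(* Let $p$ be an odd prime and $d\ge 3$ an integer with $p\nmid d$ and $d\not\equiv 1 \pmod p$. Let $f(x)=x^d+F(x)$ and $f'(x)=x^d+F'(x)$, where $F,F'\in\overline{\mathbb{F}}_p[x]$ are each either $0$ or of degree at most $d-2$, and no monomial appearing in $F$ or $F'$ has an exponent divisible by $p$ (in particular there is no constant term). Suppose $(M,\lambda,h)$ transforms $C_f$ into $C_{f'}$. Then, after normalizing $M$ so that $M(x)=\alpha x+\beta$ (which is possible since $M$ must fix $\infty$), one has $\beta=0$, $\lambda=\alpha^d$ (so $\alpha^{d(p-1)}=1$), and $h$ is a constant lying in $\mathbb{F}_p$. In other words, up to composition with an automorphism $(x,y)\mapsto(x,y+c)$, $c\in\mathbb{F}_p$, the isomorphism is $(x,y)\mapsto(\alpha x,\alpha^d y)$.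
   Context: Let $p$ be an odd prime. For $f\in\overline{\mathbb{F}}_p(x)$ not of the form $z^p-z$ with $z\in\overline{\mathbb{F}}_p(x)$, $C_f$ denotes the Artin–Schreier curve $y^p-y=f(x)$ over $\overline{\mathbb{F}}_p$. For a Möbius transformation $M(x)=\frac{\alpha x+\beta}{\gamma x+\delta}$ ($\alpha,\beta,\gamma,\delta\in\overline{\mathbb{F}}_p$, $\alpha\delta-\beta\gamma\neq0$), $\lambda\in\mathbb{F}_p^\times$ and $h\in\overline{\mathbb{F}}_p(x)$, we say that $(M,\lambda,h)$ transforms $C_f$ into $C_{f'}$ if $f(M(x))=\lambda f'(x)+h(x)^p-h(x)$; equivalently, substituting $x\mapsto M(x)$, $y\mapsto \lambda y+h(x)$ into the equation of $C_f$ yields the equation of $C_{f'}$. *)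

theory Defs
  imports "HOL-Computational_Algebra.Computational_Algebra"
begin

text \<open>Rational functions over a field k are modelled as the fraction field
  k poly fract.  A polynomial P embeds as Fract P 1.\<close>

definition rat_of_poly :: "'k::field poly \<Rightarrow> 'k poly fract" where
  "rat_of_poly P = Fract P 1"

text \<open>Substitution of the Moebius transformation M(x) = (a x + b)/(c x + e)
  into a polynomial P, giving the rational function P(M(x)):
  P(M(x)) = (sum_i P_i (a x + b)^i (c x + e)^(n - i)) / (c x + e)^n, n = deg P.\<close>

definition mobius_subst_poly ::
  "'k::field \<Rightarrow> 'k \<Rightarrow> 'k \<Rightarrow> 'k \<Rightarrow> 'k poly \<Rightarrow> 'k poly fract" where
  "mobius_subst_poly a b c e P =
     Fract (\<Sum>i\<le>degree P. smult (coeff P i) ([:b, a:] ^ i * [:e, c:] ^ (degree P - i)))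
           ([:e, c:] ^ degree P)"

text \<open>(M, lambda, h) transforms C_f into C_f' (f, f' polynomials, lambda in F_p^x given as an
  integer representative, h a rational function):
  f(M(x)) = lambda f'(x) + h^p - h.\<close>

definition transforms ::
  "nat \<Rightarrow> 'k::field \<Rightarrow> 'k \<Rightarrow> 'k \<Rightarrow> 'k \<Rightarrow> int \<Rightarrow> 'k poly fract \<Rightarrow> 'k poly \<Rightarrow> 'k poly \<Rightarrow> bool" where
  "transforms p a b c e lam h f f' \<longleftrightarrow>
     a * e - b * c \<noteq> 0 \<and> \<not> int p dvd lam \<and>
     mobius_subst_poly a b c e f = of_int lam * rat_of_poly f' + h ^ p - h"

definition algebraic_over_prime_field :: "'k::field \<Rightarrow> bool" where
  "algebraic_over_prime_field x \<longleftrightarrow>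
     (\<exists>P::'k poly. P \<noteq> 0 \<and> (\<forall>i. coeff P i \<in> range of_int) \<and> poly P x = 0)"

end

theory Submission
  imports Defs "HOL-Number_Theory.Cong"
begin

text \<open>Write h = N / D in lowest terms and clear denominators in f(M x) = lam f' x + h^p - h.
  If M x = (a x + b) / (c x + e) with c \<noteq> 0, the left-hand side has a pole of order d at
  x = -e/c, whereas every pole of the right-hand side has order divisible by p; as p does not
  divide d, we get c = 0. Then h cannot have poles either, so
  f(\<alpha> x + \<beta>) - lam f' x = H^p - H for a polynomial H, and the degree of H^p - H is divisible
  by p. Since neither d nor d - 1 is, this degree is below d - 1, so the coefficient
  d \<alpha>^(d-1) \<beta> of x^(d-1) vanishes, i.e. \<beta> = 0. Now f(\<alpha> x) - lam f' x has no monomials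
  with exponent divisible by p, in particular none in its degree, so it is zero: lam = \<alpha>^d and
  H^p = H, which makes H a constant in the prime field.\<close>

lemma of_nat_power_CHAR:
  assumes "prime CHAR('a::comm_semiring_1)"
  shows "(of_nat n :: 'a) ^ CHAR('a) = of_nat n"
proof (induction n)
  case 0
  show ?case using prime_gt_0_nat[OF assms] by (simp add: zero_power)
next
  case (Suc n)
  then show ?case using freshmans_dream[OF assms refl, of "of_nat n" 1] by (simp add: add.commute)
qed

lemma of_int_power_CHAR:
  assumes "prime CHAR('a::comm_ring_1)"
  shows "(of_int k :: 'a) ^ CHAR('a) = of_int k"
proof -
  have "CHAR('a) > 0" using assms prime_gt_0_nat by blast
  then have "(of_int k :: 'a) = of_int (k mod int CHAR('a))"
    by (simp add: of_int_eq_iff_cong_CHAR cong_def)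
  also have "\<dots> = of_nat (nat (k mod int CHAR('a)))"
    using \<open>CHAR('a) > 0\<close> by simp
  finally show ?thesis using of_nat_power_CHAR[OF assms] by simp
qed

lemma of_int_power_CHAR_minus_one:
  assumes "prime CHAR('a::field)" and "\<not> int CHAR('a) dvd k"
  shows "(of_int k :: 'a) ^ (CHAR('a) - 1) = 1"
proof -
  have "(of_int k :: 'a) \<noteq> 0"
    using assms(2) of_int_eq_iff_cong_CHAR[where 'a='a, of k 0] by (simp add: cong_0_iff)
  moreover have "(of_int k :: 'a) ^ (CHAR('a) - 1) * of_int k = of_int k"
    using of_int_power_CHAR[OF assms(1), of k] prime_gt_0_nat[OF assms(1)]
    by (simp flip: power_Suc2)
  ultimately show ?thesis by simp
qed

lemma power_CHAR_eq_self_imp_Ints: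
  fixes x :: "'a::field"
  assumes prime: "prime CHAR('a)" and fixed: "x ^ CHAR('a) = x"
  shows "x \<in> \<int>"
proof (rule ccontr)
  assume "x \<notin> \<int>"
  define p where "p = CHAR('a)"
  define P :: "'a poly" where "P = monom 1 p - [:0, 1:]"
  have "p \<ge> 2" using prime prime_ge_2_nat p_def by blast
  then have deg: "degree P = p"
    unfolding P_def diff_conv_add_uminus by (subst degree_add_eq_left) (auto simp: degree_monom_eq)
  then have "P \<noteq> 0" using \<open>p \<ge> 2\<close> by auto
  have roots: "insert x (of_nat ` {..<p}) \<subseteq> {y. poly P y = 0}"
    using fixed of_nat_power_CHAR[OF prime] by (auto simp: P_def poly_monom p_def)
  have "inj_on (of_nat :: nat \<Rightarrow> 'a) {..<p}"
    by (auto simp: inj_on_def of_nat_eq_iff_cong_CHAR cong_def p_def)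
  moreover have "x \<notin> of_nat ` {..<p}"
    using \<open>x \<notin> \<int>\<close> by (auto simp: Ints_of_nat)
  ultimately have "Suc p = card (insert x (of_nat ` {..<p}))"
    by (simp add: card_image)
  also have "\<dots> \<le> card {y. poly P y = 0}"
    using roots poly_roots_finite[OF \<open>P \<noteq> 0\<close>] by (rule card_mono[rotated])
  also have "\<dots> \<le> p"
    using card_poly_roots_bound[OF \<open>P \<noteq> 0\<close>] deg by simp
  finally show False by simp
qed

lemma degree_power_minus_self:
  fixes H :: "'a::idom poly"
  assumes "2 \<le> n"
  shows "degree (H ^ n - H) = n * degree H"
proof (cases "degree H = 0")
  case True
  have "degree (H ^ n) \<le> degree H * n" by (rule degree_power_le)
  then show ?thesis using True degree_diff_le[of "H ^ n" 0 H] by simp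
next
  case False
  then have "degree (H ^ n) = n * degree H" by (intro degree_power_eq) auto
  then show ?thesis
    using False assms diff_conv_add_uminus degree_add_eq_left[of "- H" "H ^ n"] by simp
qed

lemma poly_power_CHAR_eq_self_imp_const:
  fixes H :: "'a::field poly"
  assumes prime: "prime CHAR('a)" and "H ^ CHAR('a) = H"
  obtains k :: int where "H = [:of_int k:]"
proof -
  have "CHAR('a) * degree H = 0"
    using degree_power_minus_self[of "CHAR('a)" H] prime_ge_2_nat[OF prime] assms(2) by simp
  then obtain x where H: "H = [:x:]"
    using prime_gt_0_nat[OF prime] by (auto elim: degree_eq_zeroE)
  with assms(2) have "x ^ CHAR('a) = x" by (simp add: poly_const_pow)
  then have "x \<in> \<int>" by (rule power_CHAR_eq_self_imp_Ints[OF prime])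
  then show ?thesis using H that by (auto elim: Ints_cases)
qed

lemma pcompose_as_sum: "f \<circ>\<^sub>p q = (\<Sum>i\<le>degree f. smult (coeff f i) (q ^ i))"
  by (simp add: pcompose_altdef poly_altdef degree_map_poly coeff_map_poly)

lemma coeff_linear_power_above:
  fixes a b :: "'a::comm_semiring_1"
  assumes "n < m"
  shows "coeff ([:b, a:] ^ n) m = 0"
proof (rule coeff_eq_0)
  have "degree ([:b, a:] ^ n) \<le> degree [:b, a:] * n" by (rule degree_power_le)
  also have "\<dots> \<le> n" by (simp add: degree_pCons_le)
  finally show "degree ([:b, a:] ^ n) < m" using assms by simp
qed

lemma
  fixes a b :: "'a::comm_semiring_1"
  shows coeff_linear_power_top: "coeff ([:b, a:] ^ n) n = a ^ n"
    and coeff_linear_power_below_top: "coeff ([:b, a:] ^ Suc n) n = of_nat (Suc n) * a ^ n * b"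
proof -
  have step: "coeff ([:b, a:] ^ Suc k) (Suc m) = b * coeff ([:b, a:] ^ k) (Suc m) + a * coeff ([:b, a:] ^ k) m"
    for k m by simp
  show top: "coeff ([:b, a:] ^ n) n = a ^ n" for n
    by (induction n) (simp_all only: step coeff_linear_power_above lessI, simp_all)
  show "coeff ([:b, a:] ^ Suc n) n = of_nat (Suc n) * a ^ n * b"
    by (induction n) (simp_all only: step top, simp_all add: algebra_simps)
qed

lemma coeff_pcompose_linear_below_degree:
  fixes a b :: "'a::comm_semiring_1"
  assumes "degree f = Suc n"
  shows "coeff (f \<circ>\<^sub>p [:b, a:]) n = a ^ n * (coeff f n + of_nat (Suc n) * b * lead_coeff f)"
proof -
  have "coeff (f \<circ>\<^sub>p [:b, a:]) n =
      (\<Sum>i<n. coeff f i * coeff ([:b, a:] ^ i) n) + coeff f n * coeff ([:b, a:] ^ n) n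
      + lead_coeff f * coeff ([:b, a:] ^ Suc n) n"
    by (simp add: pcompose_as_sum coeff_sum assms lessThan_Suc_atMost [symmetric])
  moreover have "(\<Sum>i<n. coeff f i * coeff ([:b, a:] ^ i) n) = 0"
    by (intro sum.neutral) (simp add: coeff_linear_power_above)
  ultimately show ?thesis
    unfolding coeff_linear_power_top coeff_linear_power_below_top by (simp add: algebra_simps)
qed

lemma order_power: "P \<noteq> 0 \<Longrightarrow> order x (P ^ n) = n * order x P"
  by (induction n) (simp_all add: order_mult order_0I)

lemma order_linear_poly_root:
  fixes c e :: "'a::field"
  assumes "c \<noteq> 0"
  shows "order (- e / c) [:e, c:] = 1"
proof -
  have "[:e, c:] = smult c [:- (- e / c), 1:]" using assms by simp
  then show ?thesis
    using assms order_power_n_n[of "- e / c" 1] by (simp add: order_smult del: smult_pCons)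
qed

lemma rat_of_poly_eq_to_fract: "rat_of_poly = to_fract"
  by (simp add: fun_eq_iff rat_of_poly_def to_fract_def)

lemma to_fract_of_int: "to_fract (of_int k) = of_int k"
  by (induction k rule: int_induct[where k = 0]) simp_all

lemma to_fract_power: "to_fract (x ^ n) = to_fract x ^ n"
  by (induction n) simp_all

lemma to_fract_smult_of_int: "to_fract (smult (of_int k) P) = of_int k * to_fract P"
proof -
  have "smult (of_int k) P = of_int k * P" by (simp add: of_int_poly)
  then show ?thesis by (simp add: to_fract_of_int)
qed

lemma Fract_power: "Fract a b ^ n = Fract (a ^ n) (b ^ n)"
  by (induction n) (simp_all add: One_fract_def)

lemma Fract_cases_no_common_root:
  fixes h :: "'a::field poly fract"
  obtains N D where "h = Fract N D" and "D \<noteq> 0" and "\<And>x. poly N x = 0 \<Longrightarrow> poly D x \<noteq> 0"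
proof -
  have lowest_terms: "\<exists>N D. h = Fract N D \<and> D \<noteq> 0 \<and> (\<forall>x. poly N x = 0 \<longrightarrow> poly D x \<noteq> 0)"
    if "h = Fract N D" "D \<noteq> 0" for N D
    using that
  proof (induction "degree D" arbitrary: N D rule: less_induct)
    case less
    show ?case
    proof (cases "\<exists>x. poly N x = 0 \<and> poly D x = 0")
      case True
      then obtain x N' D' where N: "N = [:-x, 1:] * N'" and D: "D = [:-x, 1:] * D'"
        by (meson dvdE poly_eq_0_iff_dvd)
      have "D' \<noteq> 0" using D less.prems(2) by auto
      moreover have "h = Fract N' D'"
        unfolding less.prems(1) N D by (rule mult_fract_cancel) simp
      moreover have "degree D' < degree D"
        unfolding D using \<open>D' \<noteq> 0\<close> by (subst degree_mult_eq) auto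
      ultimately show ?thesis using less.hyps by blast
    next
      case False
      then show ?thesis using less.prems by blast
    qed
  qed
  obtain N D where "h = Fract N D" "D \<noteq> 0" by (cases h rule: Fract_cases)
  then show ?thesis using lowest_terms that by blast
qed

lemma Fract_power_minus_self:
  fixes N D :: "'a::idom"
  assumes "D \<noteq> 0" and "0 < p"
  shows "Fract N D ^ p - Fract N D = Fract (N ^ p - N * D ^ (p - 1)) (D ^ p)"
proof -
  have "D ^ p = D ^ (p - 1) * D" using assms(2) by (simp flip: power_Suc2)
  then show ?thesis using assms(1) by (simp add: Fract_power eq_fract algebra_simps)
qed

lemma power_minus_self_poly_imp_poly:
  fixes h :: "'a::alg_closed_field poly fract"
  assumes "2 \<le> p" and "h ^ p - h = to_fract P"
  obtains H where "h = to_fract H"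
proof -
  obtain N D where h: "h = Fract N D" and "D \<noteq> 0"
    and no_common_root: "\<And>x. poly N x = 0 \<Longrightarrow> poly D x \<noteq> 0"
    using Fract_cases_no_common_root[of h] by blast
  have "Fract (N ^ p - N * D ^ (p - 1)) (D ^ p) = Fract P 1"
    using assms \<open>D \<noteq> 0\<close> by (simp add: h Fract_power_minus_self to_fract_def)
  then have Np: "N ^ p = P * D ^ p + N * D ^ (p - 1)"
    using \<open>D \<noteq> 0\<close> by (simp add: eq_fract algebra_simps)
  have "degree D = 0"
  proof (rule ccontr)
    assume "degree D \<noteq> 0"
    then obtain x where "poly D x = 0" using alg_closed_imp_poly_has_root by blast
    moreover from this have "poly N x = 0"
      using arg_cong[OF Np, of "\<lambda>Q. poly Q x"] assms(1) by (simp add: poly_power zero_power)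
    ultimately show False using no_common_root by blast
  qed
  then obtain d where "D = [:d:]" by (rule degree_eq_zeroE)
  with \<open>D \<noteq> 0\<close> have "h = to_fract (smult (inverse d) N)"
    by (simp add: h to_fract_def eq_fract)
  then show ?thesis by (rule that)
qed

definition mobius_numerator :: "'a::comm_ring_1 \<Rightarrow> 'a \<Rightarrow> 'a \<Rightarrow> 'a \<Rightarrow> 'a poly \<Rightarrow> 'a poly" where
  "mobius_numerator a b c e P =
     (\<Sum>i\<le>degree P. smult (coeff P i) ([:b, a:] ^ i * [:e, c:] ^ (degree P - i)))"

lemma mobius_subst_poly_eq_Fract:
  "mobius_subst_poly a b c e P = Fract (mobius_numerator a b c e P) ([:e, c:] ^ degree P)"
  by (simp add: mobius_subst_poly_def mobius_numerator_def)

lemma poly_mobius_numerator_pole: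
  fixes a b c e :: "'a::field"
  assumes "c \<noteq> 0"
  shows "poly (mobius_numerator a b c e P) (- e / c) = lead_coeff P * poly [:b, a:] (- e / c) ^ degree P"
proof -
  have "poly (mobius_numerator a b c e P) (- e / c) =
      (\<Sum>i\<le>degree P. if i = degree P then lead_coeff P * poly [:b, a:] (- e / c) ^ degree P else 0)"
    unfolding mobius_numerator_def poly_sum using assms
    by (intro sum.cong) (auto simp: poly_power zero_power)
  then show ?thesis by simp
qed

lemma mobius_subst_poly_affine:
  fixes a b e :: "'a::field"
  assumes "e \<noteq> 0"
  shows "mobius_subst_poly a b 0 e P = to_fract (P \<circ>\<^sub>p [:b / e, a / e:])"
proof -
  have "mobius_numerator a b 0 e P = [:e ^ degree P:] * (P \<circ>\<^sub>p [:b / e, a / e:])"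
    unfolding mobius_numerator_def pcompose_as_sum sum_distrib_left
  proof (rule sum.cong)
    fix i assume "i \<in> {..degree P}"
    then have "e ^ degree P = e ^ i * e ^ (degree P - i)" by (simp flip: power_add)
    moreover have "[:b, a:] ^ i = smult (e ^ i) ([:b / e, a / e:] ^ i)"
      using assms by (simp flip: smult_power)
    ultimately show "smult (coeff P i) ([:b, a:] ^ i * [:e, 0:] ^ (degree P - i)) =
        [:e ^ degree P:] * smult (coeff P i) ([:b / e, a / e:] ^ i)"
      by (simp add: smult_power poly_const_pow mult_ac)
  qed simp
  then show ?thesis using assms
    by (simp add: mobius_subst_poly_eq_Fract to_fract_def eq_fract poly_const_pow)
qed

lemma transforms_Fract_cleared:
  fixes f f' N D :: "'a::field poly"
  assumes "transforms p a b c e lam (Fract N D) f f'" and "D \<noteq> 0" and "0 < p"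
  shows "mobius_numerator a b c e f * D ^ p =
    (smult (of_int lam) f' * D ^ p + N ^ p - N * D ^ (p - 1)) * [:e, c:] ^ degree f"
proof -
  have "[:e, c:] ^ degree f \<noteq> 0" and "D ^ p \<noteq> 0"
    using assms(1,2) by (auto simp: transforms_def)
  have "of_int lam * rat_of_poly f' = Fract (smult (of_int lam) f') 1"
    by (simp add: rat_of_poly_eq_to_fract flip: to_fract_smult_of_int) (simp add: to_fract_def)
  then have "Fract (mobius_numerator a b c e f) ([:e, c:] ^ degree f) =
      Fract (smult (of_int lam) f' * D ^ p + N ^ p - N * D ^ (p - 1)) (D ^ p)"
    using assms by (simp add: transforms_def mobius_subst_poly_eq_Fract Fract_power_minus_self
        flip: add_diff_eq)
  with \<open>[:e, c:] ^ degree f \<noteq> 0\<close> \<open>D ^ p \<noteq> 0\<close> show ?thesis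
    by (simp add: eq_fract mult.commute)
qed

lemma transforms_fixes_infinity:
  fixes f f' :: "'a::field poly"
  assumes tr: "transforms p a b c e lam h f f'" and "2 \<le> p" and "\<not> p dvd degree f"
  shows "c = 0"
proof (rule ccontr)
  assume "c \<noteq> 0"
  define x where "x = - e / c"
  obtain N D where h: "h = Fract N D" and "D \<noteq> 0"
    and no_common_root: "\<And>x. poly N x = 0 \<Longrightarrow> poly D x \<noteq> 0"
    using Fract_cases_no_common_root[of h] by blast
  define S where "S = mobius_numerator a b c e f"
  define T where "T = smult (of_int lam) f' * D ^ p + N ^ p - N * D ^ (p - 1)"
  have cleared: "S * D ^ p = T * [:e, c:] ^ degree f"
    using transforms_Fract_cleared[of p a b c e lam N D f f'] tr h \<open>D \<noteq> 0\<close> assms(2)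
    by (simp add: S_def T_def)
  have "poly [:b, a:] x \<noteq> 0"
    using tr \<open>c \<noteq> 0\<close> by (auto simp: transforms_def x_def field_simps)
  moreover have "f \<noteq> 0" using assms(3) by auto
  ultimately have "poly S x \<noteq> 0"
    using poly_mobius_numerator_pole[OF \<open>c \<noteq> 0\<close>] by (simp add: S_def x_def)
  then have "S * D ^ p \<noteq> 0" using \<open>D \<noteq> 0\<close> by auto
  then have "T \<noteq> 0" using cleared by auto
  have "order x [:e, c:] = 1"
    unfolding x_def using \<open>c \<noteq> 0\<close> by (rule order_linear_poly_root)
  then have orders: "p * order x D = order x T + degree f"
    using arg_cong[OF cleared, of "order x"] \<open>S * D ^ p \<noteq> 0\<close> \<open>T \<noteq> 0\<close> \<open>D \<noteq> 0\<close> \<open>poly S x \<noteq> 0\<close> \<open>c \<noteq> 0\<close>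
    by (simp add: order_mult order_power order_0I)
  show False
  proof (cases "poly D x = 0")
    case True
    then have "poly T x \<noteq> 0"
      using no_common_root[of x] assms(2) by (auto simp: T_def poly_power zero_power)
    then have "order x T = 0" by (rule order_0I)
    then show False using orders assms(3) by (metis add_0 dvd_triv_left)
  next
    case False
    then have "order x D = 0" by (rule order_0I)
    then show False using orders assms(3) by simp
  qed
qed

lemma transforms_affine_imp_poly:
  fixes f f' :: "'a::alg_closed_field poly"
  assumes tr: "transforms p a b 0 e lam h f f'" and "2 \<le> p"
  obtains H where "h = to_fract H"
    and "f \<circ>\<^sub>p [:b / e, a / e:] - smult (of_int lam) f' = H ^ p - H"
proof -
  have "e \<noteq> 0" using tr by (auto simp: transforms_def)
  have "h ^ p - h = to_fract (f \<circ>\<^sub>p [:b / e, a / e:] - smult (of_int lam) f')"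
    using tr mobius_subst_poly_affine[OF \<open>e \<noteq> 0\<close>]
    by (simp add: transforms_def rat_of_poly_eq_to_fract to_fract_smult_of_int)
  moreover obtain H where h: "h = to_fract H"
    using power_minus_self_poly_imp_poly[OF \<open>2 \<le> p\<close> calculation] by blast
  ultimately have "to_fract (H ^ p - H) = to_fract (f \<circ>\<^sub>p [:b / e, a / e:] - smult (of_int lam) f')"
    by (simp add: to_fract_power)
  then show ?thesis using h that by (metis to_fract_eq_iff)
qed

definition artin_schreier_normal_form :: "nat \<Rightarrow> nat \<Rightarrow> 'a::comm_ring_1 poly \<Rightarrow> bool" where
  "artin_schreier_normal_form p d f \<longleftrightarrow>
     degree f = d \<and> coeff f d = 1 \<and> coeff f (d - 1) = 0 \<and> (\<forall>i. p dvd i \<longrightarrow> coeff f i = 0)"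

lemma artin_schreier_normal_formI:
  fixes F :: "'a::comm_ring_1 poly"
  assumes "2 \<le> d" and "\<not> p dvd d" and "F = 0 \<or> degree F \<le> d - 2"
    and "\<forall>i. coeff F i \<noteq> 0 \<longrightarrow> \<not> p dvd i"
  shows "artin_schreier_normal_form p d (monom 1 d + F)"
proof -
  have F_high: "coeff F i = 0" if "d - 1 \<le> i" for i
    using assms(1,3) that by (auto intro: coeff_eq_0)
  have "degree F < degree (monom (1::'a) d)"
    using assms(1,3) by (auto simp: degree_monom_eq)
  then have "degree (monom 1 d + F) = d"
    by (simp add: degree_add_eq_left degree_monom_eq)
  then show ?thesis
    using F_high[of d] F_high[of "d - 1"] assms
    by (auto simp: artin_schreier_normal_form_def coeff_monom)
qed

lemma artin_schreier_normal_form_not_dvd: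
  "artin_schreier_normal_form p d f \<Longrightarrow> \<not> p dvd d"
  by (auto simp: artin_schreier_normal_form_def)

lemma artin_schreier_normal_form_shift_eq_0:
  fixes f f' H :: "'a::field poly"
  assumes nf: "artin_schreier_normal_form p d f" "artin_schreier_normal_form p d f'"
    and "2 \<le> p" and "\<not> p dvd d - 1" and "of_nat d \<noteq> (0::'a)" and "a \<noteq> 0"
    and eq: "f \<circ>\<^sub>p [:b, a:] - smult l f' = H ^ p - H"
  shows "b = 0"
proof -
  define R where "R = f \<circ>\<^sub>p [:b, a:] - smult l f'"
  have "degree (f \<circ>\<^sub>p [:b, a:]) = d"
    using nf(1) \<open>a \<noteq> 0\<close> by (simp add: artin_schreier_normal_form_def degree_pcompose)
  then have "degree R \<le> d"
    using nf(2) by (auto simp: R_def artin_schreier_normal_form_def intro: degree_diff_le)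
  have "p dvd degree R"
    unfolding R_def eq degree_power_minus_self[OF \<open>2 \<le> p\<close>] by simp
  have "\<not> p dvd d" using nf(1) by (rule artin_schreier_normal_form_not_dvd)
  then obtain n where d: "d = Suc n" by (cases d) auto
  have "degree R \<noteq> d" and "degree R \<noteq> n"
    using \<open>p dvd degree R\<close> \<open>\<not> p dvd d\<close> assms(4) d by auto
  with \<open>degree R \<le> d\<close> have "degree R < n" unfolding d by linarith
  then have "coeff R n = 0" by (simp add: coeff_eq_0)
  moreover have "coeff R n = a ^ n * (of_nat d * b)"
    using coeff_pcompose_linear_below_degree[of f n b a] nf d
    by (simp add: R_def artin_schreier_normal_form_def)
  ultimately show "b = 0" using assms(5,6) by simp
qed

lemma artin_schreier_normal_form_dilation:
  fixes f f' H :: "'a::field poly"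
  assumes nf: "artin_schreier_normal_form p d f" "artin_schreier_normal_form p d f'"
    and "2 \<le> p" and eq: "f \<circ>\<^sub>p [:0, a:] - smult l f' = H ^ p - H"
  shows "l = a ^ d" and "H ^ p = H"
proof -
  define R where "R = f \<circ>\<^sub>p [:0, a:] - smult l f'"
  have coeff_R: "coeff R i = a ^ i * coeff f i - l * coeff f' i" for i
    by (simp add: R_def coeff_pcompose_linear)
  have "p dvd degree R"
    unfolding R_def eq degree_power_minus_self[OF \<open>2 \<le> p\<close>] by simp
  then have "R = 0"
    using coeff_R[of "degree R"] nf by (simp add: artin_schreier_normal_form_def)
  then show "H ^ p = H" using eq by (simp add: R_def)
  show "l = a ^ d" using coeff_R[of d] \<open>R = 0\<close> nf by (simp add: artin_schreier_normal_form_def)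
qed

theorem proposition4p2:
  fixes p d :: nat
    and F F' :: "'k::alg_closed_field poly"
    and a b c e :: 'k
    and lam :: int
    and h :: "'k poly fract"
  assumes char: "CHAR('k) = p"
    and alg: "\<forall>x::'k. algebraic_over_prime_field x"
    and p_prime: "prime p" and p_odd: "odd p"
    and d3: "d \<ge> 3" and pd: "\<not> p dvd d" and d1: "d mod p \<noteq> 1"
    and F_deg: "F = 0 \<or> degree F \<le> d - 2"
    and F'_deg: "F' = 0 \<or> degree F' \<le> d - 2"
    and F_exp: "\<forall>i. coeff F i \<noteq> 0 \<longrightarrow> \<not> p dvd i"
    and F'_exp: "\<forall>i. coeff F' i \<noteq> 0 \<longrightarrow> \<not> p dvd i"
    and tr: "transforms p a b c e lam h (monom 1 d + F) (monom 1 d + F')"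
  shows "c = 0 \<and> e \<noteq> 0 \<and> b / e = 0 \<and> of_int lam = (a / e) ^ d
         \<and> (a / e) ^ (d * (p - 1)) = 1
         \<and> (\<exists>k::int. h = rat_of_poly [:of_int k:])"
proof -
  let ?f = "monom 1 d + F" and ?f' = "monom 1 d + F'"
  have "2 \<le> p" using p_prime by (rule prime_ge_2_nat)
  have "\<not> p dvd d - 1" using d1 d3 \<open>2 \<le> p\<close> mod_eq_dvd_iff_nat[of 1 d p] by simp
  have nf: "artin_schreier_normal_form p d ?f" "artin_schreier_normal_form p d ?f'"
    using d3 pd F_deg F'_deg F_exp F'_exp by (auto intro: artin_schreier_normal_formI)
  have "c = 0"
    using transforms_fixes_infinity[OF tr \<open>2 \<le> p\<close>] nf(1) pd
    by (simp add: artin_schreier_normal_form_def)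
  with tr have "e \<noteq> 0" and "a \<noteq> 0" and "\<not> int p dvd lam" by (auto simp: transforms_def)
  define \<alpha> \<beta> where "\<alpha> = a / e" and "\<beta> = b / e"
  obtain H where h: "h = to_fract H" and AS: "?f \<circ>\<^sub>p [:\<beta>, \<alpha>:] - smult (of_int lam) ?f' = H ^ p - H"
    using transforms_affine_imp_poly tr \<open>c = 0\<close> \<open>2 \<le> p\<close> unfolding \<alpha>_def \<beta>_def by blast
  have "(of_nat d :: 'k) \<noteq> 0" and "\<alpha> \<noteq> 0"
    using char pd \<open>a \<noteq> 0\<close> \<open>e \<noteq> 0\<close> by (simp_all add: of_nat_eq_0_iff_char_dvd \<alpha>_def)
  with AS have "\<beta> = 0"
    using artin_schreier_normal_form_shift_eq_0[OF nf \<open>2 \<le> p\<close> \<open>\<not> p dvd d - 1\<close>] by blast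
  with AS have lam: "of_int lam = \<alpha> ^ d" and "H ^ p = H"
    using artin_schreier_normal_form_dilation[OF nf \<open>2 \<le> p\<close>] by auto
  then obtain k :: int where "H = [:of_int k:]"
    using poly_power_CHAR_eq_self_imp_const[of H] char p_prime by auto
  moreover have "\<alpha> ^ (d * (p - 1)) = 1"
    using of_int_power_CHAR_minus_one[where 'a = 'k, of lam] char p_prime \<open>\<not> int p dvd lam\<close>
    by (simp add: lam power_mult)
  ultimately show ?thesis
    using \<open>c = 0\<close> \<open>e \<noteq> 0\<close> \<open>\<beta> = 0\<close> lam h by (auto simp: \<alpha>_def \<beta>_def rat_of_poly_eq_to_fract)
qed

end
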